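(* Let $\Bbbk$ be a field of characteristic zero, $S=\Bbbk[x_1,\ldots,x_5]$, and let $I = (x_1^3,\dots , x_5^3, x_1^2x_2, x_1x_2^2)$ and $J = (x_1^3,\dots , x_5^3, x_1^2x_2, x_1x_2^2,x_3x_4x_5)$. Then $S/I$ and $S/J$ both fail the WLP in degree $4$.
   Context: For a monomial ideal $I$, $A=S/I$ fails the WLP in degree $i$ if $\times(x_1+\cdots+x_5): A_i\to A_{i+1}$ is neither injective nor surjective. *)

theory Defs
  imports Main "HOL-Library.Poly_Mapping"
begin

text \<open>The ring S = k[x_1,...,x_5] is the subring of polynomials
  involving only the variables with index 1..5.\<close>

type_synonym 'a mpoly = "(nat \<Rightarrow>\<^sub>0 nat) \<Rightarrow>\<^sub>0 'a"

definition Var :: "nat \<Rightarrow> 'a::comm_ring_1 mpoly" where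
  "Var i = Poly_Mapping.single (Poly_Mapping.single i 1) 1"

definition in_S :: "'a::comm_ring_1 mpoly \<Rightarrow> bool" where
  "in_S p \<longleftrightarrow> (\<forall>m\<in>Poly_Mapping.keys p. Poly_Mapping.keys m \<subseteq> {1..5::nat})"

definition mdeg :: "(nat \<Rightarrow>\<^sub>0 nat) \<Rightarrow> nat" where
  "mdeg m = (\<Sum>i\<in>Poly_Mapping.keys m. Poly_Mapping.lookup m i)"

definition homog :: "nat \<Rightarrow> 'a::comm_ring_1 mpoly \<Rightarrow> bool" where
  "homog d p \<longleftrightarrow> (\<forall>m\<in>Poly_Mapping.keys p. mdeg m = d)"

definition ideal_gen :: "'a::comm_ring_1 mpoly list \<Rightarrow> 'a mpoly set" where
  "ideal_gen gs = {p. \<exists>c. (\<forall>k<length gs. in_S (c k)) \<and> p = (\<Sum>k<length gs. c k * gs ! k)}"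

definition ell :: "'a::comm_ring_1 mpoly" where
  "ell = (\<Sum>i\<in>{1..5}. Var i)"

text \<open>Multiplication by ell from A_d to A_(d+1), where A = S/I, is injective
  resp. surjective.\<close>
definition mult_ell_injective :: "'a::comm_ring_1 mpoly set \<Rightarrow> nat \<Rightarrow> bool" where
  "mult_ell_injective I d \<longleftrightarrow>
     (\<forall>f. in_S f \<and> homog d f \<and> ell * f \<in> I \<longrightarrow> f \<in> I)"

definition mult_ell_surjective :: "'a::comm_ring_1 mpoly set \<Rightarrow> nat \<Rightarrow> bool" where
  "mult_ell_surjective I d \<longleftrightarrow>
     (\<forall>g. in_S g \<and> homog (d + 1) g \<longrightarrow>
        (\<exists>f. in_S f \<and> homog d f \<and> g - ell * f \<in> I))"

definition fails_WLP_in_degree :: "'a::comm_ring_1 mpoly set \<Rightarrow> nat \<Rightarrow> bool" where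
  "fails_WLP_in_degree I d \<longleftrightarrow> \<not> mult_ell_injective I d \<and> \<not> mult_ell_surjective I d"

definition gens_I :: "'a::comm_ring_1 mpoly list" where
  "gens_I = [Var 1 ^ 3, Var 2 ^ 3, Var 3 ^ 3, Var 4 ^ 3, Var 5 ^ 3,
             Var 1 ^ 2 * Var 2, Var 1 * Var 2 ^ 2]"

definition gens_J :: "'a::comm_ring_1 mpoly list" where
  "gens_J = gens_I @ [Var 3 * Var 4 * Var 5]"

end

theory Submission
  imports Defs
begin

text \<open>Both failures are detected in degree 5. Put \<open>P = (x\<^sub>1 + x\<^sub>2)\<^sup>2 - (x\<^sub>1 + x\<^sub>2) x\<^sub>3 + x\<^sub>3\<^sup>2\<close>
  and \<open>Q = x\<^sub>4\<^sup>2 - x\<^sub>4 x\<^sub>5 + x\<^sub>5\<^sup>2\<close>. Since \<open>(a + b)(a\<^sup>2 - a b + b\<^sup>2) = a\<^sup>3 + b\<^sup>3\<close>,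
  \<open>\<ell> P Q = ((x\<^sub>1 + x\<^sub>2)\<^sup>3 + x\<^sub>3\<^sup>3) Q + (x\<^sub>4\<^sup>3 + x\<^sub>5\<^sup>3) P\<close> lies in \<open>I\<close>, while \<open>P Q\<close>
  contains the monomial \<open>x\<^sub>3\<^sup>2 x\<^sub>4\<^sup>2\<close>, which no generator of \<open>J\<close> divides; so multiplication
  by \<open>\<ell>\<close> is not injective.

  For surjectivity, pair a polynomial with the inverse-system form
  \<open>F = (y\<^sub>1\<^sup>2 - y\<^sub>1 y\<^sub>2 + y\<^sub>2\<^sup>2)(y\<^sub>3 - y\<^sub>4)(y\<^sub>3 - y\<^sub>5)(y\<^sub>4 - y\<^sub>5)\<close>, i.e. send \<open>x\<^sup>m\<close> to the
  coefficient of \<open>y\<^sup>m\<close> in \<open>F\<close>. Contraction by \<open>\<ell>\<close> kills both factors of \<open>F\<close>, so the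
  pairing vanishes on \<open>\<ell> S\<^sub>4\<close>; no monomial of \<open>F\<close> is a multiple of a generator of \<open>J\<close>, so
  it vanishes on \<open>J\<close>; but it is \<open>1\<close> on \<open>x\<^sub>1\<^sup>2 x\<^sub>3\<^sup>2 x\<^sub>4\<close>.\<close>

lemma sum_atLeastAtMost_1_5:
  "(\<Sum>i\<in>{1..5::nat}. f i) = f 1 + f 2 + f 3 + f 4 + (f 5 :: 'a::comm_monoid_add)"
  by (simp add: numeral_eq_Suc atLeastAtMostSuc_conv add.commute add.left_commute)

lemma keys_add_exponents:
  "Poly_Mapping.keys ((a :: nat \<Rightarrow>\<^sub>0 nat) + b) = Poly_Mapping.keys a \<union> Poly_Mapping.keys b"
  by (auto simp: in_keys_iff lookup_add)

lemma poly_mapping_sum_single: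
  "p = (\<Sum>m\<in>Poly_Mapping.keys p. Poly_Mapping.single m (Poly_Mapping.lookup p m))"
  by (rule poly_mapping_eqI) (simp add: lookup_sum lookup_single when_def in_keys_iff)

lemma keys_multE:
  assumes "m \<in> Poly_Mapping.keys (p * q)"
  obtains a b where "a \<in> Poly_Mapping.keys p" "b \<in> Poly_Mapping.keys q" "m = a + b"
  using keys_mult[of p q] assms by blast

lemma mdeg_eq_sum:
  assumes "finite K" "Poly_Mapping.keys m \<subseteq> K"
  shows "mdeg m = (\<Sum>i\<in>K. Poly_Mapping.lookup m i)"
  unfolding mdeg_def by (rule sum.mono_neutral_left) (use assms in \<open>auto simp: in_keys_iff\<close>)

lemma mdeg_add: "mdeg (a + b) = mdeg a + mdeg b"
proof -
  let ?K = "Poly_Mapping.keys a \<union> Poly_Mapping.keys b"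
  have "mdeg (a + b) = (\<Sum>i\<in>?K. Poly_Mapping.lookup a i + Poly_Mapping.lookup b i)"
    by (simp add: mdeg_eq_sum[of ?K] keys_add_exponents lookup_add)
  also have "\<dots> = mdeg a + mdeg b"
    by (simp add: sum.distrib mdeg_eq_sum[of ?K])
  finally show ?thesis .
qed

lemma mdeg_single [simp]: "mdeg (Poly_Mapping.single i k) = k"
  by (simp add: mdeg_def)

lemma homog_add: "homog d p \<Longrightarrow> homog d q \<Longrightarrow> homog d (p + q)"
  unfolding homog_def using keys_add[of p q] by blast

lemma homog_diff: "homog d p \<Longrightarrow> homog d q \<Longrightarrow> homog d (p - q)"
  unfolding homog_def using keys_diff[of p q] by blast

lemma homog_mult: "homog d p \<Longrightarrow> homog e q \<Longrightarrow> homog (d + e) (p * q)"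
  unfolding homog_def by (auto elim!: keys_multE simp: mdeg_add)

lemma homog_Var: "homog 1 (Var i)"
  by (simp add: homog_def Var_def)

lemma homog_single: "homog (mdeg m) (Poly_Mapping.single m c)"
  by (simp add: homog_def)

lemma in_S_add: "in_S p \<Longrightarrow> in_S q \<Longrightarrow> in_S (p + q)"
  unfolding in_S_def using keys_add[of p q] by blast

lemma in_S_diff: "in_S p \<Longrightarrow> in_S q \<Longrightarrow> in_S (p - q)"
  unfolding in_S_def using keys_diff[of p q] by blast

lemma in_S_mult: "in_S p \<Longrightarrow> in_S q \<Longrightarrow> in_S (p * q)"
  unfolding in_S_def by (auto elim!: keys_multE simp: keys_add_exponents subset_iff)

lemma in_S_numeral: "in_S (numeral n)"
  by (simp add: in_S_def flip: single_numeral)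

lemma in_S_Var: "i \<in> {1..5} \<Longrightarrow> in_S (Var i)"
  by (simp add: in_S_def Var_def)

lemma in_S_single: "Poly_Mapping.keys m \<subseteq> {1..5} \<Longrightarrow> in_S (Poly_Mapping.single m c)"
  by (simp add: in_S_def)

lemma ideal_gen_sumI:
  "(\<And>k. k < length gs \<Longrightarrow> in_S (c k)) \<Longrightarrow> (\<Sum>k<length gs. c k * gs ! k) \<in> ideal_gen gs"
  unfolding ideal_gen_def by blast

lemma ideal_gen_append_subset: "ideal_gen gs \<subseteq> ideal_gen (gs @ hs)"
proof
  fix p assume "p \<in> ideal_gen gs"
  then obtain c where c: "\<And>k. k < length gs \<Longrightarrow> in_S (c k)" and p: "p = (\<Sum>k<length gs. c k * gs ! k)"
    by (auto simp: ideal_gen_def)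
  let ?c = "\<lambda>k. if k < length gs then c k else 0"
  have "(\<Sum>k<length (gs @ hs). ?c k * (gs @ hs) ! k) = (\<Sum>k<length gs. ?c k * (gs @ hs) ! k)"
    by (rule sum.mono_neutral_right) auto
  also have "\<dots> = p"
    by (simp add: p nth_append)
  finally have "p = (\<Sum>k<length (gs @ hs). ?c k * (gs @ hs) ! k)" ..
  moreover have "(\<Sum>k<length (gs @ hs). ?c k * (gs @ hs) ! k) \<in> ideal_gen (gs @ hs)"
    by (rule ideal_gen_sumI) (use c in \<open>simp add: in_S_def\<close>)
  ultimately show "p \<in> ideal_gen (gs @ hs)"
    by simp
qed

lemma keys_ideal_genE:
  assumes "p \<in> ideal_gen gs" "m \<in> Poly_Mapping.keys p"
  obtains g u x where "g \<in> set gs" "u \<in> Poly_Mapping.keys g" "m = x + u"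
proof -
  obtain c where "p = (\<Sum>k<length gs. c k * gs ! k)"
    using assms(1) by (auto simp: ideal_gen_def)
  with assms(2) obtain k where "k < length gs" "m \<in> Poly_Mapping.keys (c k * gs ! k)"
    using keys_sum[of "\<lambda>k. c k * gs ! k" "{..<length gs}"] by auto
  then show thesis
    by (metis keys_multE nth_mem that)
qed

subsection \<open>Pairing with a form of the inverse system\<close>

definition pairing :: "((nat \<Rightarrow>\<^sub>0 nat) \<Rightarrow> 'a) \<Rightarrow> 'a::comm_ring_1 mpoly \<Rightarrow> 'a" where
  "pairing w p = (\<Sum>m\<in>Poly_Mapping.keys p. w m * Poly_Mapping.lookup p m)"

lemma pairing_eq_sum:
  assumes "finite K" "Poly_Mapping.keys p \<subseteq> K"
  shows "pairing w p = (\<Sum>m\<in>K. w m * Poly_Mapping.lookup p m)"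
  unfolding pairing_def by (rule sum.mono_neutral_left) (use assms in \<open>auto simp: in_keys_iff\<close>)

lemma pairing_zero [simp]: "pairing w 0 = 0"
  by (simp add: pairing_def)

lemma pairing_single [simp]: "pairing w (Poly_Mapping.single m c) = w m * c"
  by (simp add: pairing_def)

lemma pairing_add: "pairing w (p + q) = pairing w p + pairing w q"
proof -
  let ?K = "Poly_Mapping.keys p \<union> Poly_Mapping.keys q"
  show ?thesis
    using keys_add[of p q]
    by (simp add: pairing_eq_sum[of ?K] lookup_add distrib_left sum.distrib)
qed

lemma pairing_diff: "pairing w (p - q) = pairing w p - pairing w q"
proof -
  let ?K = "Poly_Mapping.keys p \<union> Poly_Mapping.keys q"
  show ?thesis
    using keys_diff[of p q]
    by (simp add: pairing_eq_sum[of ?K] lookup_minus right_diff_distrib sum_subtractf)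
qed

lemma pairing_sum: "pairing w (\<Sum>x\<in>X. f x) = (\<Sum>x\<in>X. pairing w (f x))"
  by (induction X rule: infinite_finite_induct) (simp_all add: pairing_add)

lemma ell_eq: "ell = Var 1 + Var 2 + Var 3 + Var 4 + Var 5"
  unfolding ell_def by (rule sum_atLeastAtMost_1_5)

lemma ell_mult_single:
  "ell * Poly_Mapping.single m c = (\<Sum>i\<in>{1..5}. Poly_Mapping.single (m + Poly_Mapping.single i 1) c)"
  by (simp add: ell_def Var_def sum_distrib_right mult_single add.commute)

text \<open>The hypothesis says that the form with coefficients \<open>w\<close> is annihilated by \<open>ell\<close>
  acting by contraction.\<close>

lemma pairing_ell_mult:
  assumes contract: "\<And>m. Poly_Mapping.keys m \<subseteq> {1..5} \<Longrightarrow> (\<Sum>i\<in>{1..5}. w (m + Poly_Mapping.single i 1)) = 0"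
    and "in_S f"
  shows "pairing w (ell * f) = 0"
proof -
  have "pairing w (ell * f) =
      (\<Sum>m\<in>Poly_Mapping.keys f. (\<Sum>i\<in>{1..5}. w (m + Poly_Mapping.single i 1)) * Poly_Mapping.lookup f m)"
    by (subst poly_mapping_sum_single)
      (simp add: sum_distrib_left ell_mult_single pairing_sum sum_distrib_right)
  also have "\<dots> = 0"
    using \<open>in_S f\<close> unfolding in_S_def by (intro sum.neutral ballI) (simp only: contract mult_zero_left)
  finally show ?thesis .
qed

lemma pairing_ideal_gen:
  assumes "p \<in> ideal_gen gs"
    and "\<And>g u x. g \<in> set gs \<Longrightarrow> u \<in> Poly_Mapping.keys g \<Longrightarrow> w (x + u) = 0"
  shows "pairing w p = 0"
  unfolding pairing_def
  by (rule sum.neutral) (metis assms keys_ideal_genE mult_zero_left)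

lemma not_mult_ell_surjective_pairing:
  assumes "\<And>f. in_S f \<Longrightarrow> pairing w (ell * f) = 0" "\<And>p. p \<in> I \<Longrightarrow> pairing w p = 0"
    and "in_S g" "homog (d + 1) g" "pairing w g \<noteq> 0"
  shows "\<not> mult_ell_surjective I d"
proof
  assume "mult_ell_surjective I d"
  then obtain f where "in_S f" "g - ell * f \<in> I"
    using assms(3,4) unfolding mult_ell_surjective_def by blast
  then have "pairing w g = 0"
    using assms(1,2) by (metis pairing_diff diff_zero)
  with assms(5) show False ..
qed

definition mon :: "nat \<Rightarrow> nat \<Rightarrow> nat \<Rightarrow> nat \<Rightarrow> nat \<Rightarrow> nat \<Rightarrow>\<^sub>0 nat" where
  "mon a b c d e = Poly_Mapping.single 1 a + Poly_Mapping.single 2 b + Poly_Mapping.single 3 c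
     + Poly_Mapping.single 4 d + Poly_Mapping.single 5 e"

lemma lookup_mon:
  "Poly_Mapping.lookup (mon a b c d e) i =
     (if i = 1 then a else if i = 2 then b else if i = 3 then c else if i = 4 then d
      else if i = 5 then e else 0)"
  by (simp add: mon_def lookup_add lookup_single)

lemma keys_mon: "Poly_Mapping.keys (mon a b c d e) \<subseteq> {1..5}"
  by (auto simp: in_keys_iff lookup_mon split: if_splits)

lemma mdeg_mon: "mdeg (mon a b c d e) = a + b + c + d + e"
  by (simp add: mon_def mdeg_add)

lemma mon_eq_iff:
  "mon a b c d e = mon a' b' c' d' e' \<longleftrightarrow> a = a' \<and> b = b' \<and> c = c' \<and> d = d' \<and> e = e'"
proof
  assume eq: "mon a b c d e = mon a' b' c' d' e'"
  have "Poly_Mapping.lookup (mon a b c d e) i = Poly_Mapping.lookup (mon a' b' c' d' e') i" for i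
    by (simp only: eq)
  from this[of 1] this[of 2] this[of 3] this[of 4] this[of 5]
  show "a = a' \<and> b = b' \<and> c = c' \<and> d = d' \<and> e = e'"
    by (simp add: lookup_mon)
qed simp

lemma mon_add: "mon a b c d e + mon a' b' c' d' e' = mon (a + a') (b + b') (c + c') (d + d') (e + e')"
  by (rule poly_mapping_eqI) (simp add: lookup_add lookup_mon)

lemma Var_eq_mon:
  "Var 1 = Poly_Mapping.single (mon 1 0 0 0 0) 1" "Var 2 = Poly_Mapping.single (mon 0 1 0 0 0) 1"
  "Var 3 = Poly_Mapping.single (mon 0 0 1 0 0) 1" "Var 4 = Poly_Mapping.single (mon 0 0 0 1 0) 1"
  "Var 5 = Poly_Mapping.single (mon 0 0 0 0 1) 1"
  by (simp_all add: Var_def mon_def)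

lemma mon_eq_add_imp_le:
  assumes "mon a b c d e = x + mon a' b' c' d' e'"
  shows "a' \<le> a \<and> b' \<le> b \<and> c' \<le> c \<and> d' \<le> d \<and> e' \<le> e"
proof -
  have "Poly_Mapping.lookup (mon a' b' c' d' e') i \<le> Poly_Mapping.lookup (mon a b c d e) i" for i
    by (simp add: assms lookup_add)
  from this[of 1] this[of 2] this[of 3] this[of 4] this[of 5] show ?thesis
    by (simp add: lookup_mon)
qed

lemma Var_power: "Var i ^ k = Poly_Mapping.single (Poly_Mapping.single i k) 1"
  by (induction k) (simp_all add: Var_def mult_single flip: single_add)

definition gens_J_exponents :: "(nat \<Rightarrow>\<^sub>0 nat) list" where
  "gens_J_exponents = [mon 3 0 0 0 0, mon 0 3 0 0 0, mon 0 0 3 0 0, mon 0 0 0 3 0, mon 0 0 0 0 3,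
     mon 2 1 0 0 0, mon 1 2 0 0 0, mon 0 0 1 1 1]"

lemma gens_J_monomials: "gens_J = map (\<lambda>m. Poly_Mapping.single m 1) gens_J_exponents"
  unfolding gens_J_def gens_I_def Var_power
  by (simp add: gens_J_exponents_def Var_def mult_single mon_def)

lemma keys_gens_J:
  "g \<in> set gens_J \<Longrightarrow> Poly_Mapping.keys g \<subseteq> set gens_J_exponents"
  by (auto simp: gens_J_monomials)

subsection \<open>The failure of surjectivity\<close>

text \<open>The coefficients of \<open>y\<^sub>1\<^sup>2 - y\<^sub>1 y\<^sub>2 + y\<^sub>2\<^sup>2\<close> and of the Vandermonde
  \<open>(y\<^sub>3 - y\<^sub>4)(y\<^sub>3 - y\<^sub>5)(y\<^sub>4 - y\<^sub>5)\<close>.\<close>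

definition quadric_coeff :: "nat \<Rightarrow> nat \<Rightarrow> 'a::comm_ring_1" where
  "quadric_coeff a b =
     (if (a, b) \<in> {(2, 0), (0, 2)} then 1 else if (a, b) = (1, 1) then -1 else 0)"

definition vandermonde_coeff :: "nat \<Rightarrow> nat \<Rightarrow> nat \<Rightarrow> 'a::comm_ring_1" where
  "vandermonde_coeff c d e =
     (if (c, d, e) \<in> {(2, 1, 0), (0, 2, 1), (1, 0, 2)} then 1
      else if (c, d, e) \<in> {(2, 0, 1), (1, 2, 0), (0, 1, 2)} then -1 else 0)"

definition dual_form :: "(nat \<Rightarrow>\<^sub>0 nat) \<Rightarrow> 'a::comm_ring_1" where
  "dual_form m = quadric_coeff (Poly_Mapping.lookup m 1) (Poly_Mapping.lookup m 2)
     * vandermonde_coeff (Poly_Mapping.lookup m 3) (Poly_Mapping.lookup m 4) (Poly_Mapping.lookup m 5)"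

lemma quadric_coeff_contract: "quadric_coeff (Suc a) b + quadric_coeff a (Suc b) = 0"
  by (cases a; cases b) (auto simp: quadric_coeff_def)

lemma vandermonde_coeff_contract:
  "vandermonde_coeff (Suc c) d e + vandermonde_coeff c (Suc d) e + vandermonde_coeff c d (Suc e) = 0"
  by (cases c; cases d; cases e) (auto simp: vandermonde_coeff_def numeral_eq_Suc)

lemma dual_form_contract: "(\<Sum>i\<in>{1..5}. dual_form (m + Poly_Mapping.single i 1)) = 0"
proof -
  let ?q = "quadric_coeff (Poly_Mapping.lookup m 1) (Poly_Mapping.lookup m 2)"
  let ?v = "vandermonde_coeff (Poly_Mapping.lookup m 3) (Poly_Mapping.lookup m 4) (Poly_Mapping.lookup m 5)"
  have "(\<Sum>i\<in>{1..5}. dual_form (m + Poly_Mapping.single i 1)) =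
      (quadric_coeff (Suc (Poly_Mapping.lookup m 1)) (Poly_Mapping.lookup m 2)
        + quadric_coeff (Poly_Mapping.lookup m 1) (Suc (Poly_Mapping.lookup m 2))) * ?v
    + ?q * (vandermonde_coeff (Suc (Poly_Mapping.lookup m 3)) (Poly_Mapping.lookup m 4) (Poly_Mapping.lookup m 5)
        + vandermonde_coeff (Poly_Mapping.lookup m 3) (Suc (Poly_Mapping.lookup m 4)) (Poly_Mapping.lookup m 5)
        + vandermonde_coeff (Poly_Mapping.lookup m 3) (Poly_Mapping.lookup m 4) (Suc (Poly_Mapping.lookup m 5)))"
    unfolding sum_atLeastAtMost_1_5 by (simp add: dual_form_def lookup_add lookup_single algebra_simps)
  then show ?thesis
    by (simp add: quadric_coeff_contract vandermonde_coeff_contract)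
qed

lemma quadric_coeff_eq_0: "2 < a + b \<Longrightarrow> quadric_coeff a b = 0"
  by (auto simp: quadric_coeff_def)

lemma vandermonde_coeff_eq_0:
  "2 < c \<or> 2 < d \<or> 2 < e \<or> (0 < c \<and> 0 < d \<and> 0 < e) \<Longrightarrow> vandermonde_coeff c d e = 0"
  by (auto simp: vandermonde_coeff_def)

lemma dual_form_multiple_eq_0:
  assumes "u \<in> set gens_J_exponents"
  shows "dual_form (x + u) = 0"
  using assms unfolding gens_J_exponents_def dual_form_def
  by (auto simp: lookup_add lookup_mon quadric_coeff_eq_0 vandermonde_coeff_eq_0)

lemma not_mult_ell_surjective_degree_4:
  fixes gs :: "'a::comm_ring_1 mpoly list"
  assumes "set gs \<subseteq> set gens_J"
  shows "\<not> mult_ell_surjective (ideal_gen gs) 4"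
proof (rule not_mult_ell_surjective_pairing)
  show "pairing dual_form (ell * f) = 0" if "in_S f" for f :: "'a mpoly"
    using pairing_ell_mult[OF dual_form_contract that] .
  show "pairing dual_form p = 0" if "p \<in> ideal_gen gs" for p :: "'a mpoly"
    using that by (rule pairing_ideal_gen) (use assms keys_gens_J dual_form_multiple_eq_0 in blast)
  show "in_S (Poly_Mapping.single (mon 2 0 2 1 0) (1::'a))"
    by (rule in_S_single[OF keys_mon])
  show "homog (4 + 1) (Poly_Mapping.single (mon 2 0 2 1 0) (1::'a))"
    using homog_single[of "mon 2 0 2 1 0"] by (simp add: mdeg_mon)
  show "pairing dual_form (Poly_Mapping.single (mon 2 0 2 1 0) (1::'a)) \<noteq> 0"
    by (simp add: dual_form_def lookup_mon quadric_coeff_def vandermonde_coeff_def)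
qed

subsection \<open>The failure of injectivity\<close>

definition cube_sum_cofactor :: "'a::comm_ring_1 \<Rightarrow> 'a \<Rightarrow> 'a" where
  "cube_sum_cofactor a b = a\<^sup>2 - a * b + b\<^sup>2"

lemma cube_sum_factor: "(a + b) * cube_sum_cofactor a b = a ^ 3 + b ^ 3"
  by (simp add: cube_sum_cofactor_def algebra_simps power2_eq_square power3_eq_cube)

lemma in_S_cube_sum_cofactor: "in_S a \<Longrightarrow> in_S b \<Longrightarrow> in_S (cube_sum_cofactor a b)"
  by (simp add: cube_sum_cofactor_def power2_eq_square in_S_add in_S_diff in_S_mult)

lemma homog_cube_sum_cofactor:
  assumes "homog 1 a" "homog 1 b"
  shows "homog 2 (cube_sum_cofactor a b)"
proof -
  have "homog 2 (x * y)" if "homog 1 x" "homog 1 y" for x y :: "'a mpoly"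
    using homog_mult[OF that] by (simp only: one_add_one)
  with assms show ?thesis
    by (simp add: cube_sum_cofactor_def power2_eq_square homog_add homog_diff)
qed

definition kernel_witness :: "'a::comm_ring_1 mpoly" where
  "kernel_witness = cube_sum_cofactor (Var 1 + Var 2) (Var 3) * cube_sum_cofactor (Var 4) (Var 5)"

lemma in_S_kernel_witness: "in_S kernel_witness"
  by (simp add: kernel_witness_def in_S_mult in_S_add in_S_cube_sum_cofactor in_S_Var)

lemma homog_kernel_witness: "homog 4 kernel_witness"
  using homog_mult[OF homog_cube_sum_cofactor[OF homog_add[OF homog_Var homog_Var] homog_Var]
      homog_cube_sum_cofactor[OF homog_Var homog_Var]]
  by (simp add: kernel_witness_def)

lemma ell_mult_kernel_witness: "ell * (kernel_witness :: 'a::comm_ring_1 mpoly) \<in> ideal_gen gens_I"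
proof -
  let ?n = "length (gens_I :: 'a mpoly list)"
  define P where "P = cube_sum_cofactor (Var 1 + Var 2) (Var 3 :: 'a mpoly)"
  define Q where "Q = cube_sum_cofactor (Var 4) (Var 5 :: 'a mpoly)"
  define cs where "cs = [Q, Q, Q, P, P, 3 * Q, 3 * Q]"
  have cs_in_S: "in_S (cs ! k)" if "k < ?n" for k
  proof -
    have "in_S P" "in_S Q"
      by (simp_all add: P_def Q_def in_S_cube_sum_cofactor in_S_add in_S_Var)
    then have "\<forall>c\<in>set cs. in_S c"
      by (simp add: cs_def in_S_mult in_S_numeral)
    moreover have "length cs = ?n"
      by (simp add: cs_def gens_I_def)
    ultimately show ?thesis
      using that by (metis nth_mem)
  qed
  have "ell * kernel_witness = ((Var 1 + Var 2 + Var 3) * P) * Q + ((Var 4 + Var 5) * Q) * P"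
    by (simp add: kernel_witness_def P_def Q_def ell_eq algebra_simps)
  also have "\<dots> = ((Var 1 + Var 2) ^ 3 + Var 3 ^ 3) * Q + (Var 4 ^ 3 + Var 5 ^ 3) * P"
    by (simp only: P_def Q_def cube_sum_factor)
  also have "\<dots> = (\<Sum>k<?n. cs ! k * gens_I ! k)"
    by (simp add: cs_def gens_I_def eval_nat_numeral algebra_simps power2_eq_square power3_eq_cube)
  also have "\<dots> \<in> ideal_gen gens_I"
    by (rule ideal_gen_sumI) (rule cs_in_S)
  finally show ?thesis .
qed

lemma lookup_kernel_witness: "Poly_Mapping.lookup (kernel_witness :: 'a::comm_ring_1 mpoly) (mon 0 0 2 2 0) = 1"
  unfolding kernel_witness_def cube_sum_cofactor_def power2_eq_square Var_eq_mon
  by (simp only: distrib_left distrib_right left_diff_distrib right_diff_distrib mult_single mon_add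
      lookup_add lookup_minus lookup_single) (simp add: mon_eq_iff)

lemma kernel_witness_notin_ideal_gen:
  fixes gs :: "'a::comm_ring_1 mpoly list"
  assumes "set gs \<subseteq> set gens_J"
  shows "kernel_witness \<notin> ideal_gen gs"
proof
  assume "kernel_witness \<in> ideal_gen gs"
  moreover have "mon 0 0 2 2 0 \<in> Poly_Mapping.keys (kernel_witness :: 'a mpoly)"
    by (simp add: in_keys_iff lookup_kernel_witness)
  ultimately obtain g u x where "g \<in> set gs" "u \<in> Poly_Mapping.keys g" and eq: "mon 0 0 2 2 0 = x + u"
    by (rule keys_ideal_genE)
  then have "u \<in> set gens_J_exponents"
    using assms keys_gens_J by blast
  with eq show False
    by (auto simp: gens_J_exponents_def dest: mon_eq_add_imp_le)
qed

lemma not_mult_ell_injective_degree_4: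
  fixes gs :: "'a::comm_ring_1 mpoly list"
  assumes "ideal_gen gens_I \<subseteq> ideal_gen gs" "set gs \<subseteq> set gens_J"
  shows "\<not> mult_ell_injective (ideal_gen gs) 4"
  unfolding mult_ell_injective_def
  using in_S_kernel_witness homog_kernel_witness ell_mult_kernel_witness assms
    kernel_witness_notin_ideal_gen by blast

lemma fails_WLP_in_degree_4:
  fixes gs :: "'a::comm_ring_1 mpoly list"
  assumes "ideal_gen gens_I \<subseteq> ideal_gen gs" "set gs \<subseteq> set gens_J"
  shows "fails_WLP_in_degree (ideal_gen gs) 4"
  unfolding fails_WLP_in_degree_def
  using not_mult_ell_injective_degree_4[OF assms] not_mult_ell_surjective_degree_4[OF assms(2)] ..

theorem lemma4p7:
  shows "fails_WLP_in_degree (ideal_gen (gens_I :: 'a::field_char_0 mpoly list)) 4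
       \<and> fails_WLP_in_degree (ideal_gen (gens_J :: 'a mpoly list)) 4"
proof
  have "ideal_gen gens_I \<subseteq> ideal_gen (gens_J :: 'a mpoly list)"
    unfolding gens_J_def by (rule ideal_gen_append_subset)
  moreover have "set gens_I \<subseteq> set (gens_J :: 'a mpoly list)"
    by (auto simp: gens_J_def)
  ultimately show "fails_WLP_in_degree (ideal_gen (gens_I :: 'a mpoly list)) 4"
    and "fails_WLP_in_degree (ideal_gen (gens_J :: 'a mpoly list)) 4"
    by (simp_all add: fails_WLP_in_degree_4)
qed

end
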